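(* Let $F$, $G$, $\Pi$ be as in the context. For every $(\omega,x)\in\Sigma_A\times I$ for which the forward Lyapunov exponent $\chi_+^G(\omega,x)$ with respect to $G$ exists, the forward Lyapunov exponent $\chi_+(\Pi(\omega,x))$ with respect to $F$ exists and $\chi_+^G(\omega,x)=\chi_+(\Pi(\omega,x))$.
   Context: $I=[0,1]$, $R(x)=1-x$. $F(\xi,p)=(\sigma(\xi),f_{\xi_0}(p))$ on $\Sigma_N\times I$, $\Sigma_N=\{1,\ldots,N\}^{\mathbb Z}$, with $f_i$ $C^1$-diffeomorphisms onto their images. $\mathcal I_P$ / $\mathcal I_R$: indices of orientation preserving / reversing $f_i$. $A=(a_{ij})_{i,j=1}^{2N}$ with $a_{ij}=1$ if ($i\in\mathcal I_P$, $j\le N$), or ($i\in\mathcal I_R$, $j>N$), or ($i-N\in\mathcal I_P$, $j>N$), or ($i-N\in\mathcal I_R$, $j\le N$), else $0$; $\Sigma_A$ the $A$-admissible sequences in $\{1,\ldots,2N\}^{\mathbb Z}$ with shift $\sigma_A$; $\pi(\omega)_n=\overline{\omega_n}$ ($\overline i=i$ for $i\le N$, $\overline i=i-N$ otherwise). $G(\omega,x)=(\sigma_A(\omega),g_{\omega_0}(x))$ with $g_i=f_i$, $g_{i+N}=R\circ f_i\circ R$ ($i\in\mathcal I_P$), $g_i=R\circ f_i$, $g_{i+N}=f_i\circ R$ ($i\in\mathcal I_R$). $C=\{\omega\colon\omega_0\le N\}$; $\Pi(\omega,x)=(\pi(\omega),x)$ if $\omega\in C$, $(\pi(\omega),R(x))$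 otherwise. Forward Lyapunov exponents: $\chi_+(\xi,p)=\lim_n\frac1n\log|(f_{\xi_{n-1}}\circ\cdots\circ f_{\xi_0})'(p)|$ and $\chi_+^G(\omega,x)=\lim_n\frac1n\log|(g_{\omega_{n-1}}\circ\cdots\circ g_{\omega_0})'(x)|$, when the limits exist. *)

theory Defs
  imports "HOL-Analysis.Analysis"
begin

definition Ival :: "real set" where "Ival = {0..1}"

definition Rf :: "real \<Rightarrow> real" where "Rf x = 1 - x"

definition C1_diffeo_into :: "(real \<Rightarrow> real) \<Rightarrow> bool" where
  "C1_diffeo_into h \<longleftrightarrow> h ` Ival \<subseteq> Ival \<and> inj_on h Ival \<and>
     (\<exists>h'. (\<forall>x\<in>Ival. (h has_real_derivative h' x) (at x within Ival) \<and> h' x \<noteq> 0)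
           \<and> continuous_on Ival h')"

definition IP :: "nat \<Rightarrow> (nat \<Rightarrow> real \<Rightarrow> real) \<Rightarrow> nat set" where
  "IP N f = {i \<in> {1..N}. strict_mono_on Ival (f i)}"

definition IR :: "nat \<Rightarrow> (nat \<Rightarrow> real \<Rightarrow> real) \<Rightarrow> nat set" where
  "IR N f = {i \<in> {1..N}. monotone_on Ival (<) (>) (f i)}"

definition matA :: "nat \<Rightarrow> (nat \<Rightarrow> real \<Rightarrow> real) \<Rightarrow> nat \<Rightarrow> nat \<Rightarrow> nat" where
  "matA N f i j =
     (if (i \<in> IP N f \<and> j \<le> N) \<or> (i \<in> IR N f \<and> j > N)
         \<or> (i > N \<and> i - N \<in> IP N f \<and> j > N) \<or> (i > N \<and> i - N \<in> IR N f \<and> j \<le> N)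
      then 1 else 0)"

definition SigmaA :: "nat \<Rightarrow> (nat \<Rightarrow> real \<Rightarrow> real) \<Rightarrow> (int \<Rightarrow> nat) set" where
  "SigmaA N f = {\<omega>. (\<forall>n. \<omega> n \<in> {1..2*N}) \<and> (\<forall>n. matA N f (\<omega> n) (\<omega> (n+1)) = 1)}"

definition bar :: "nat \<Rightarrow> nat \<Rightarrow> nat" where
  "bar N i = (if i \<le> N then i else i - N)"

definition piA :: "nat \<Rightarrow> (int \<Rightarrow> nat) \<Rightarrow> (int \<Rightarrow> nat)" where
  "piA N \<omega> = (\<lambda>n. bar N (\<omega> n))"

definition gfun :: "nat \<Rightarrow> (nat \<Rightarrow> real \<Rightarrow> real) \<Rightarrow> nat \<Rightarrow> real \<Rightarrow> real" where
  "gfun N f i =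
     (if i \<le> N then (if i \<in> IP N f then f i else Rf \<circ> f i)
      else (if i - N \<in> IP N f then Rf \<circ> f (i - N) \<circ> Rf else f (i - N) \<circ> Rf))"

definition PiMap :: "nat \<Rightarrow> (int \<Rightarrow> nat) \<Rightarrow> real \<Rightarrow> (int \<Rightarrow> nat) \<times> real" where
  "PiMap N \<omega> x = (piA N \<omega>, if \<omega> 0 \<le> N then x else Rf x)"

fun itcomp :: "(nat \<Rightarrow> real \<Rightarrow> real) \<Rightarrow> (int \<Rightarrow> nat) \<Rightarrow> nat \<Rightarrow> real \<Rightarrow> real" where
  "itcomp h s 0 = id"
| "itcomp h s (Suc n) = h (s (int n)) \<circ> itcomp h s n"

definition fwd_lyap_has :: "(nat \<Rightarrow> real \<Rightarrow> real) \<Rightarrow> (int \<Rightarrow> nat) \<Rightarrow> real \<Rightarrow> real \<Rightarrow> bool" where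
  "fwd_lyap_has h s p L \<longleftrightarrow>
     (\<exists>D. (\<forall>n. (itcomp h s n has_real_derivative D n) (at p within Ival))
          \<and> (\<lambda>n. ln \<bar>D n\<bar> / real n) \<longlonglongrightarrow> L)"

end

theory Submission
  imports Defs
begin

text \<open>Away from the coding, each fibre map of \<open>G\<close> is the corresponding fibre map
  of \<open>F\<close> conjugated by \<open>R\<close> or by the identity, and the admissibility condition of \<open>\<Sigma>\<^sub>A\<close> is
  exactly what makes consecutive conjugators cancel. Hence the \<open>n\<close>-fold composition along
  \<open>\<pi>(\<omega>)\<close> is the \<open>n\<close>-fold composition along \<open>\<omega>\<close> conjugated by maps with derivative \<open>\<plusminus>1\<close>,
  so both derivatives have the same absolute value for every \<open>n\<close>.\<close>

definition reflect_if :: "bool \<Rightarrow> real \<Rightarrow> real" where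
  "reflect_if b = (if b then Rf else id)"

lemma reflect_if_involution: "reflect_if b \<circ> reflect_if b = id"
  by (auto simp: reflect_if_def Rf_def fun_eq_iff)

lemma reflect_if_image_Ival: "reflect_if b ` Ival = Ival"
proof (cases b)
  case True
  have "Rf ` Ival = Ival"
    unfolding Ival_def Rf_def by (auto intro!: image_eqI[where x="1 - _"])
  then show ?thesis using True by (simp add: reflect_if_def)
qed (simp add: reflect_if_def)

lemma has_real_derivative_reflect_if:
  "(reflect_if b has_real_derivative (if b then -1 else 1)) (at y within S)"
  unfolding reflect_if_def Rf_def
  by (cases b) (auto intro!: derivative_eq_intros simp: id_def)

lemma has_real_derivative_reflect_if_conj:
  assumes "(g has_real_derivative D) (at (reflect_if b p) within Ival)"
  shows "\<exists>D'. (reflect_if b' \<circ> g \<circ> reflect_if b has_real_derivative D') (at p within Ival)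
              \<and> \<bar>D'\<bar> = \<bar>D\<bar>"
proof -
  have "(g \<circ> reflect_if b has_real_derivative D * (if b then -1 else 1)) (at p within Ival)"
    by (rule DERIV_image_chain)
      (use assms in \<open>simp_all add: reflect_if_image_Ival has_real_derivative_reflect_if\<close>)
  then have "(reflect_if b' \<circ> (g \<circ> reflect_if b) has_real_derivative
      (if b' then -1 else 1) * (D * (if b then -1 else 1))) (at p within Ival)"
    by (rule DERIV_image_chain[OF has_real_derivative_reflect_if])
  then show ?thesis by (intro exI[of _ "(if b' then -1 else 1) * (D * (if b then -1 else 1))"])
      (simp add: comp_assoc abs_mult)
qed

lemma itcomp_conj:
  assumes "\<And>n. c n \<circ> c n = id"
    and "\<And>n. h (s n) = c (n + 1) \<circ> k (t n) \<circ> c n"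
  shows "itcomp h s n = c (int n) \<circ> itcomp k t n \<circ> c 0"
proof (induction n)
  case 0
  then show ?case by (simp add: assms(1))
next
  case (Suc n)
  have "itcomp h s (Suc n) = c (int n + 1) \<circ> k (t (int n)) \<circ>
      (c (int n) \<circ> c (int n)) \<circ> itcomp k t n \<circ> c 0"
    unfolding itcomp.simps assms(2) Suc by (simp add: comp_assoc)
  also have "\<dots> = c (int (Suc n)) \<circ> itcomp k t (Suc n) \<circ> c 0"
    by (simp add: assms(1) comp_assoc add.commute)
  finally show ?case .
qed

lemma fwd_lyap_has_reflect_if_conj:
  assumes "\<And>n. itcomp h s n = reflect_if (b (int n)) \<circ> itcomp k t n \<circ> reflect_if (b 0)"
    and "fwd_lyap_has k t x L"
  shows "fwd_lyap_has h s (reflect_if (b 0) x) L"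
proof -
  obtain D where D: "\<And>n. (itcomp k t n has_real_derivative D n) (at x within Ival)"
    and lim: "(\<lambda>n. ln \<bar>D n\<bar> / real n) \<longlonglongrightarrow> L"
    using assms(2) unfolding fwd_lyap_has_def by blast
  have "reflect_if (b 0) (reflect_if (b 0) x) = x"
    using reflect_if_involution[of "b 0"] by (metis comp_apply id_apply)
  then have "\<exists>D'. (itcomp h s n has_real_derivative D') (at (reflect_if (b 0) x) within Ival)
                 \<and> \<bar>D'\<bar> = \<bar>D n\<bar>" for n
    unfolding assms(1) using D[of n] by (intro has_real_derivative_reflect_if_conj) simp
  then obtain D' where D': "\<And>n. (itcomp h s n has_real_derivative D' n)
      (at (reflect_if (b 0) x) within Ival)" and abs_eq: "\<And>n. \<bar>D' n\<bar> = \<bar>D n\<bar>"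
    by metis
  show ?thesis
    unfolding fwd_lyap_has_def by (intro exI[of _ D']) (simp add: D' abs_eq lim)
qed

lemma IP_IR_disjoint: "IP N f \<inter> IR N f = {}"
proof (intro equals0I)
  fix i assume "i \<in> IP N f \<inter> IR N f"
  then have "f i 0 < f i 1" and "f i 0 > f i 1"
    unfolding IP_def IR_def Ival_def by (auto simp: strict_mono_on_def monotone_on_def)
  then show False by simp
qed

text \<open>The transition matrix sends the symbol to the second copy of the alphabet exactly when
  the twisted map \<open>g\<^sub>i\<close> needs a reflection on its left to recover \<open>f\<^bsub>bar i\<^esub>\<close>.\<close>

lemma fibre_map_eq_gfun_conj:
  assumes "matA N f i j = 1"
  shows "f (bar N i) = reflect_if (N < j) \<circ> gfun N f i \<circ> reflect_if (N < i)"
proof -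
  have disj: "i' \<notin> IP N f \<or> i' \<notin> IR N f" for i' using IP_IR_disjoint by blast
  have bounded: "i' \<in> IP N f \<union> IR N f \<Longrightarrow> i' \<le> N" for i'
    by (auto simp: IP_def IR_def)
  consider
      "i \<le> N" "i \<in> IP N f" "j \<le> N" | "i \<le> N" "i \<notin> IP N f" "N < j"
    | "N < i" "i - N \<in> IP N f" "N < j" | "N < i" "i - N \<notin> IP N f" "j \<le> N"
    using assms disj[of i] disj[of "i - N"] bounded[of i] unfolding matA_def
    by (cases "i \<le> N"; cases "i \<in> IP N f"; cases "i - N \<in> IP N f") (auto split: if_splits)
  then show ?thesis
    by cases (simp_all add: reflect_if_def gfun_def bar_def fun_eq_iff Rf_def)
qed

theorem lemma3p18:
  fixes N :: nat and f :: "nat \<Rightarrow> real \<Rightarrow> real"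
    and \<omega> :: "int \<Rightarrow> nat" and x L :: real
  assumes "N \<ge> 1"
    and "\<And>i. i \<in> {1..N} \<Longrightarrow> C1_diffeo_into (f i)"
    and "\<omega> \<in> SigmaA N f" and "x \<in> Ival"
    and "fwd_lyap_has (gfun N f) \<omega> x L"
  shows "fwd_lyap_has f (fst (PiMap N \<omega> x)) (snd (PiMap N \<omega> x)) L"
proof -
  let ?b = "\<lambda>n. N < \<omega> n"
  have "matA N f (\<omega> n) (\<omega> (n + 1)) = 1" for n
    using assms(3) by (simp add: SigmaA_def)
  then have "itcomp f (piA N \<omega>) n
      = reflect_if (?b (int n)) \<circ> itcomp (gfun N f) \<omega> n \<circ> reflect_if (?b 0)" for n
    by (intro itcomp_conj reflect_if_involution) (simp add: piA_def fibre_map_eq_gfun_conj)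
  then have "fwd_lyap_has f (piA N \<omega>) (reflect_if (?b 0) x) L"
    using assms(5) by (rule fwd_lyap_has_reflect_if_conj)
  moreover have "PiMap N \<omega> x = (piA N \<omega>, reflect_if (?b 0) x)"
    by (simp add: PiMap_def reflect_if_def)
  ultimately show ?thesis by simp
qed

end
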